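(* Suppose that $A\neq B$ are strictly tree coloring equivalent $m\times m$ coloring matrices. Then there is a finite sequence $A=C_0,C_1,\dots,C_r=B$ with $r\ge1$ such that each $C_{s}$ is obtained from $C_{s-1}$ by one application of the following operation: given a coloring matrix $C=(c_{pq})$, disjoint sets $I,J\subseteq\{1,\dots,m\}$ with $|I|=|J|$ such that $\sum_{i\in I}t_C^{(i)}(n)=\sum_{j\in J}t_C^{(j)}(n)$ for all $n$, and a color $\ell$ with $c_{\ell i}=0$ for all $i\in I$ and $c_{\ell j}=1$ for all $j\in J$, replace $C$ by the matrix $C'$ that agrees with $C$ except that $c'_{\ell i}=1$ for $i\in I$ and $c'_{\ell j}=0$ for $j\in J$.
   Context: A plane tree is an unlabeled rooted tree in which the children of every vertex are linearly ordered. A coloring matrix is an $m\times m$ matrix $A=(a_{ij})$ with entries in $\{0,1\}$. An $A$-coloring of a plane tree assigns to each vertex a color in $\{1,\dots,m\}$ such that whenever a vertex of color $j$ is a child of a vertex of color $i$, $a_{ij}=1$. Let $t_A^{(i)}(n)$ be the number of pairs (plane tree with $n$ vertices, $A$-coloring of it) in which the root has color $i$. Two $m\times m$ coloring matrices $A,B$ are strictly tree coloring equivalent if $t_A^{(i)}(n)=t_B^{(i)}(n)$ for all $n\ge1$ and all $1\le i\le m$. *)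

theory Defs
  imports Main
begin

text \<open>A plane tree together with a coloring of its vertices by colors of type 'c
 (the color set {1..m} is modelled by an arbitrary finite type 'c, m = CARD('c)).
 Children are ordered by the list.\<close>
datatype 'c ctree = CNode 'c "'c ctree list"

type_synonym 'c cmatrix = "'c \<Rightarrow> 'c \<Rightarrow> bool"  \<comment> \<open>A p q \<longleftrightarrow> a_pq = 1\<close>

fun croot :: "'c ctree \<Rightarrow> 'c" where
  "croot (CNode c ts) = c"

fun csize :: "'c ctree \<Rightarrow> nat" where
  "csize (CNode c ts) = 1 + sum_list (map csize ts)"

fun is_A_colored :: "'c cmatrix \<Rightarrow> 'c ctree \<Rightarrow> bool" where
  "is_A_colored A (CNode c ts) = (\<forall>t\<in>set ts. A c (croot t) \<and> is_A_colored A t)"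

definition tcount :: "'c::finite cmatrix \<Rightarrow> 'c \<Rightarrow> nat \<Rightarrow> nat" where
  "tcount A i n = card {T. is_A_colored A T \<and> csize T = n \<and> croot T = i}"

definition strictly_tree_coloring_equivalent :: "'c::finite cmatrix \<Rightarrow> 'c cmatrix \<Rightarrow> bool" where
  "strictly_tree_coloring_equivalent A B \<longleftrightarrow> (\<forall>n\<ge>1. \<forall>i. tcount A i n = tcount B i n)"

definition switch_step :: "'c::finite cmatrix \<Rightarrow> 'c cmatrix \<Rightarrow> bool" where
  "switch_step C C' \<longleftrightarrow> (\<exists>I J l.
      I \<inter> J = {} \<and> card I = card J \<and>
      (\<forall>n\<ge>1. (\<Sum>i\<in>I. tcount C i n) = (\<Sum>j\<in>J. tcount C j n)) \<and>
      (\<forall>i\<in>I. \<not> C l i) \<and> (\<forall>j\<in>J. C l j) \<and>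
      C' = (\<lambda>p q. if p = l \<and> q \<in> I then True
                   else if p = l \<and> q \<in> J then False
                   else C p q))"

end

theory Submission
  imports Defs
begin

text \<open>Deleting the root of a tree with root color \<open>i\<close> leaves an ordered forest of trees
  whose root colors lie in row \<open>i\<close> of the matrix. Hence, writing \<open>t\<^sub>q(k)\<close> for the tree
  counts and \<open>h\<^sub>i(k)\<close> for the sum of the \<open>t\<^sub>q(k)\<close> over the row \<open>{q. c\<^sub>i\<^sub>q = 1}\<close>,
  the generating function of the \<open>t\<^sub>i(n + 1)\<close> is \<open>1 / (1 - \<Sum>\<^sub>k h\<^sub>i(k) x\<^sup>k)\<close>. So the
  \<open>t\<^sub>i\<close> determine the \<open>h\<^sub>i\<close>, and conversely, by induction on the size, the \<open>h\<^sub>i\<close> of all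
  rows determine the \<open>t\<^sub>i\<close>. If \<open>A\<close> and \<open>B\<close> are strictly equivalent, row \<open>l\<close> of \<open>A\<close> and
  row \<open>l\<close> of \<open>B\<close> therefore have equal sums \<open>h\<^sub>l\<close>; replacing row \<open>l\<close> of a matrix
  \<open>C\<close> equivalent to \<open>B\<close> by row \<open>l\<close> of \<open>B\<close> is then a switching operation (with
  \<open>I = B\<^sub>l - C\<^sub>l\<close> and \<open>J = C\<^sub>l - B\<^sub>l\<close>) that keeps all tree counts, and replacing the rows
  of \<open>A\<close> one at a time turns \<open>A\<close> into \<open>B\<close>.\<close>

lemma csize_ge_1: "csize t \<ge> 1"
  by (cases t) auto

lemma csize_neq_0 [simp]: "csize t \<noteq> 0"
  by (cases t) auto

lemma length_le_sum_list_csize: "length ts \<le> sum_list (map csize ts)"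
proof (induction ts)
  case (Cons t ts)
  then show ?case using csize_ge_1[of t] by simp
qed simp

lemma csize_le_sum_list_csize: "t \<in> set ts \<Longrightarrow> csize t \<le> sum_list (map csize ts)"
  by (induction ts) auto

lemma finite_csize_le: "finite {t :: 'c::finite ctree. csize t \<le> n}"
proof (induction n)
  case 0
  then show ?case by simp
next
  case (Suc n)
  let ?forests = "{ts. set ts \<subseteq> {t :: 'c ctree. csize t \<le> n} \<and> length ts \<le> n}"
  have "{t :: 'c ctree. csize t \<le> Suc n} \<subseteq> (\<lambda>(c, ts). CNode c ts) ` (UNIV \<times> ?forests)"
  proof
    fix t :: "'c ctree"
    assume "t \<in> {t. csize t \<le> Suc n}"
    then obtain c ts where t: "t = CNode c ts" and le: "sum_list (map csize ts) \<le> n"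
      by (cases t) auto
    have "ts \<in> ?forests"
      using le length_le_sum_list_csize[of ts] csize_le_sum_list_csize[of _ ts] by force
    then show "t \<in> (\<lambda>(c, ts). CNode c ts) ` (UNIV \<times> ?forests)" using t by force
  qed
  moreover have "finite ?forests" using finite_lists_length_le[OF Suc.IH] by simp
  ultimately show ?case by (meson finite_SigmaI finite_imageI finite_subset finite)
qed

definition colored_trees :: "'c cmatrix \<Rightarrow> 'c set \<Rightarrow> nat \<Rightarrow> 'c ctree set" where
  "colored_trees C P k = {t. is_A_colored C t \<and> croot t \<in> P \<and> csize t = k}"

definition colored_forests :: "'c cmatrix \<Rightarrow> 'c set \<Rightarrow> nat \<Rightarrow> 'c ctree list set" where
  "colored_forests C P m =
     {ts. (\<forall>t\<in>set ts. is_A_colored C t \<and> croot t \<in> P) \<and> sum_list (map csize ts) = m}"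

lemma finite_colored_trees: "finite (colored_trees (C :: 'c::finite cmatrix) P k)"
  unfolding colored_trees_def by (rule finite_subset[OF _ finite_csize_le[of k]]) auto

lemma finite_colored_forests: "finite (colored_forests (C :: 'c::finite cmatrix) P m)"
proof -
  have "colored_forests C P m \<subseteq> {ts. set ts \<subseteq> {t :: 'c ctree. csize t \<le> m} \<and> length ts \<le> m}"
    unfolding colored_forests_def
    using length_le_sum_list_csize csize_le_sum_list_csize by fastforce
  then show ?thesis using finite_lists_length_le[OF finite_csize_le] finite_subset by blast
qed

lemma card_colored_trees:
  "card (colored_trees (C :: 'c::finite cmatrix) P k) = (\<Sum>q\<in>P. tcount C q k)"
proof -
  have "colored_trees C P k = (\<Union>q\<in>P. {t. is_A_colored C t \<and> csize t = k \<and> croot t = q})"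
    by (auto simp: colored_trees_def)
  also have "card \<dots> = (\<Sum>q\<in>P. card {t. is_A_colored C t \<and> csize t = k \<and> croot t = q})"
    by (rule card_UN_disjoint) (auto intro: finite_subset[OF _ finite_csize_le[of k]])
  finally show ?thesis by (simp add: tcount_def)
qed

lemma colored_forests_0: "colored_forests C P 0 = {[]}"
  by (auto simp: colored_forests_def)

lemma colored_forests_pos:
  assumes "m > 0"
  shows "colored_forests C P m =
    (\<Union>k\<in>{1..m}. (\<lambda>(t, ts). t # ts) ` (colored_trees C P k \<times> colored_forests C P (m - k)))"
    (is "_ = ?U")
proof
  show "colored_forests C P m \<subseteq> ?U"
  proof
    fix xs
    assume xs: "xs \<in> colored_forests C P m"
    then obtain t ts where xs_eq: "xs = t # ts"
      using assms by (cases xs) (auto simp: colored_forests_def)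
    have "csize t \<in> {1..m}"
      using xs xs_eq csize_ge_1[of t] by (auto simp: colored_forests_def)
    moreover have "(t, ts) \<in> colored_trees C P (csize t) \<times> colored_forests C P (m - csize t)"
      using xs xs_eq by (auto simp: colored_forests_def colored_trees_def)
    ultimately show "xs \<in> ?U" using xs_eq by force
  qed
qed (auto simp: colored_forests_def colored_trees_def)

lemma card_colored_forests:
  fixes C :: "'c::finite cmatrix"
  shows "card (colored_forests C P m) = (if m = 0 then 1 else
    (\<Sum>k\<in>{1..m}. (\<Sum>q\<in>P. tcount C q k) * card (colored_forests C P (m - k))))"
proof (cases "m = 0")
  case False
  then have "m > 0" by simp
  have inj: "inj_on (\<lambda>(t, ts). t # ts) X" for X :: "('c ctree \<times> 'c ctree list) set"
    by (auto simp: inj_on_def)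
  have "card (colored_forests C P m) = (\<Sum>k\<in>{1..m}.
      card ((\<lambda>(t, ts). t # ts) ` (colored_trees C P k \<times> colored_forests C P (m - k))))"
    unfolding colored_forests_pos[OF \<open>m > 0\<close>]
    by (rule card_UN_disjoint)
      (simp_all add: finite_colored_trees finite_colored_forests, auto simp: colored_trees_def)
  also have "\<dots> = (\<Sum>k\<in>{1..m}. card (colored_trees C P k) * card (colored_forests C P (m - k)))"
    by (simp add: card_image[OF inj] card_cartesian_product)
  finally show ?thesis using False by (simp add: card_colored_trees)
qed (simp add: colored_forests_0)

lemma tcount_0: "tcount C i 0 = 0"
  unfolding tcount_def by simp

lemma tcount_Suc: "tcount C i (Suc m) = card (colored_forests C {q. C i q} m)"
proof -
  have "{t. is_A_colored C t \<and> csize t = Suc m \<and> croot t = i}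
        = CNode i ` colored_forests C {q. C i q} m"
  proof (intro equalityI subsetI)
    fix t
    assume "t \<in> {t. is_A_colored C t \<and> csize t = Suc m \<and> croot t = i}"
    then show "t \<in> CNode i ` colored_forests C {q. C i q} m"
      by (cases t) (auto simp: colored_forests_def)
  qed (auto simp: colored_forests_def)
  then show ?thesis unfolding tcount_def by (simp add: card_image inj_on_def)
qed

lemma tcount_1: "tcount C i 1 = 1"
  by (simp add: tcount_Suc colored_forests_0)

lemma strictly_tree_coloring_equivalent_iff:
  "strictly_tree_coloring_equivalent A B \<longleftrightarrow> tcount A = tcount B"
  unfolding strictly_tree_coloring_equivalent_def fun_eq_iff
  by (metis One_nat_def Suc_leI not_gr0 tcount_0)

text \<open>\<open>g\<close> is the coefficient sequence of \<open>1 / (1 - \<Sum>\<^sub>k\<^sub>\<ge>\<^sub>1 h k x\<^sup>k)\<close>.\<close>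

definition invert_transform :: "(nat \<Rightarrow> 'a::semiring_1) \<Rightarrow> (nat \<Rightarrow> 'a) \<Rightarrow> bool" where
  "invert_transform h g \<longleftrightarrow> (\<forall>m. g m = (if m = 0 then 1 else (\<Sum>k\<in>{1..m}. h k * g (m - k))))"

lemma invert_transform_0:
  assumes "invert_transform h g"
  shows "g 0 = 1"
  using assms[unfolded invert_transform_def, THEN spec[of _ 0]] by simp

lemma invert_transform_pos:
  assumes "invert_transform h g" and "m \<noteq> 0"
  shows "g m = (\<Sum>k\<in>{1..m}. h k * g (m - k))"
  using assms(1)[unfolded invert_transform_def, THEN spec[of _ m]] assms(2) by simp

lemma invert_transform_colored_forests:
  "invert_transform (\<lambda>k. \<Sum>q\<in>P. tcount C q k) (\<lambda>m. card (colored_forests C P m))"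
  unfolding invert_transform_def by (metis card_colored_forests)

lemma invert_transform_eq_upto:
  assumes "invert_transform h g" "invert_transform h' g'"
    and "\<And>k. 1 \<le> k \<Longrightarrow> k \<le> M \<Longrightarrow> h k = h' k"
    and "m \<le> M"
  shows "g m = g' m"
  using \<open>m \<le> M\<close>
proof (induction m rule: less_induct)
  case (less m)
  have "(\<Sum>k\<in>{1..m}. h k * g (m - k)) = (\<Sum>k\<in>{1..m}. h' k * g' (m - k))"
    by (rule sum.cong) (use assms(3) less in auto)
  then show ?case
    using invert_transform_0[OF assms(1)] invert_transform_0[OF assms(2)]
      invert_transform_pos[OF assms(1), of m] invert_transform_pos[OF assms(2), of m]
    by (cases "m = 0") simp_all
qed

lemma invert_transform_unique:
  fixes h h' :: "nat \<Rightarrow> 'a::comm_semiring_1_cancel"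
  assumes "invert_transform h g" "invert_transform h' g" and "k \<ge> 1"
  shows "h k = h' k"
  using \<open>k \<ge> 1\<close>
proof (induction k rule: less_induct)
  case (less k)
  have split: "{1..k} = insert k {1..<k}" using less.prems by auto
  have "(\<Sum>j\<in>{1..<k}. h j * g (k - j)) = (\<Sum>j\<in>{1..<k}. h' j * g (k - j))"
    by (rule sum.cong) (use less.IH in auto)
  moreover have "g k = h k + (\<Sum>j\<in>{1..<k}. h j * g (k - j))"
    using invert_transform_pos[OF assms(1), of k] invert_transform_0[OF assms(1)] less.prems
    unfolding split by simp
  moreover have "g k = h' k + (\<Sum>j\<in>{1..<k}. h' j * g (k - j))"
    using invert_transform_pos[OF assms(2), of k] invert_transform_0[OF assms(1)] less.prems
    unfolding split by simp
  ultimately show ?case by (metis add_right_cancel)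
qed

lemma tcount_eq_if_row_sums_eq:
  fixes C C' :: "'c::finite cmatrix"
  assumes rows: "\<And>p. p \<noteq> l \<Longrightarrow> C p = C' p"
    and row_l: "\<And>k. (\<Sum>q\<in>{q. C l q}. tcount C q k) = (\<Sum>q\<in>{q. C' l q}. tcount C q k)"
  shows "tcount C i n = tcount C' i n"
proof (induction n arbitrary: i rule: less_induct)
  case (less n)
  show ?case
  proof (cases n)
    case (Suc m)
    have IH: "tcount C q k = tcount C' q k" if "k \<le> m" for q k
      using less.IH that Suc by simp
    have "(\<Sum>q\<in>{q. C i q}. tcount C q k) = (\<Sum>q\<in>{q. C' i q}. tcount C' q k)"
      if "k \<le> m" for k
      using row_l[of k] rows[of i] IH[OF that] by (cases "i = l") simp_all
    then have "card (colored_forests C {q. C i q} m) = card (colored_forests C' {q. C' i q} m)"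
      by (intro invert_transform_eq_upto[OF invert_transform_colored_forests
            invert_transform_colored_forests, where M = m]) auto
    then show ?thesis using Suc by (simp add: tcount_Suc)
  qed (simp add: tcount_0)
qed

lemma row_sums_eq_if_tcount_eq:
  fixes A B :: "'c::finite cmatrix"
  assumes "tcount A = tcount B"
  shows "(\<Sum>q\<in>{q. A l q}. tcount A q k) = (\<Sum>q\<in>{q. B l q}. tcount A q k)"
proof (cases "k = 0")
  case False
  have "card (colored_forests B {q. B l q} m) = card (colored_forests A {q. A l q} m)" for m
    using assms by (metis tcount_Suc)
  then have "invert_transform (\<lambda>k. \<Sum>q\<in>{q. B l q}. tcount B q k)
      (\<lambda>m. card (colored_forests A {q. A l q} m))"
    using invert_transform_colored_forests[where P = "{q. B l q}" and C = B] by simp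
  then have "(\<Sum>q\<in>{q. A l q}. tcount A q k) = (\<Sum>q\<in>{q. B l q}. tcount B q k)"
    using invert_transform_unique[OF invert_transform_colored_forests, where k = k] False by simp
  then show ?thesis using assms by simp
qed (simp add: tcount_0)

lemma switch_step_update_row:
  fixes B C :: "'c::finite cmatrix"
  assumes equiv: "tcount C = tcount B"
  shows "switch_step C (C(l := B l))" and "tcount (C(l := B l)) = tcount C"
proof -
  define I where "I = {q. B l q \<and> \<not> C l q}"
  define J where "J = {q. C l q \<and> \<not> B l q}"
  define K where "K = {q. C l q \<and> B l q}"
  have row_sums: "(\<Sum>q\<in>{q. C l q}. tcount C q n) = (\<Sum>q\<in>{q. B l q}. tcount C q n)" for n
    using row_sums_eq_if_tcount_eq[OF equiv] .
  have "{q. C l q} = J \<union> K" "{q. B l q} = I \<union> K" "J \<inter> K = {}" "I \<inter> K = {}"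
    unfolding I_def J_def K_def by auto
  then have sums_IJ: "(\<Sum>i\<in>I. tcount C i n) = (\<Sum>j\<in>J. tcount C j n)" for n
    using row_sums[of n] by (simp add: sum.union_disjoint)
  show "switch_step C (C(l := B l))"
    unfolding switch_step_def
  proof (intro exI conjI)
    show "card I = card J"
      using sums_IJ[of 1] unfolding tcount_1 by simp
    show "C(l := B l) = (\<lambda>p q. if p = l \<and> q \<in> I then True
                              else if p = l \<and> q \<in> J then False else C p q)"
      unfolding I_def J_def by (auto simp: fun_eq_iff)
  qed (use sums_IJ in \<open>auto simp: I_def J_def\<close>)
  show "tcount (C(l := B l)) = tcount C"
    using tcount_eq_if_row_sums_eq[of l C "C(l := B l)"] row_sums by (auto simp: fun_eq_iff)
qed

theorem theorem19:
  fixes A B :: "'c::finite cmatrix"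
  assumes "A \<noteq> B"
    and "strictly_tree_coloring_equivalent A B"
  shows "\<exists>r::nat. \<exists>C :: nat \<Rightarrow> 'c cmatrix. r \<ge> 1 \<and> C 0 = A \<and> C r = B \<and>
           (\<forall>s\<in>{1..r}. switch_step (C (s - 1)) (C s))"
proof -
  have equiv: "tcount A = tcount B"
    using assms(2) by (simp add: strictly_tree_coloring_equivalent_iff)
  obtain xs :: "'c list" where xs: "set xs = UNIV"
    using finite_list[OF finite_UNIV] by blast
  define C where "C s = override_on A B (set (take s xs))" for s
  have C_Suc: "C (Suc s) = (C s)(xs ! s := B (xs ! s))" if "s < length xs" for s
    using that by (simp add: C_def take_Suc_conv_app_nth override_on_insert)
  have C_equiv: "tcount (C s) = tcount B" if "s \<le> length xs" for s
    using that
  proof (induction s)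
    case (Suc s)
    then have "tcount (C s) = tcount B" by simp
    then show ?case
      using switch_step_update_row(2) C_Suc Suc.prems by (metis Suc_le_eq)
  qed (simp add: C_def equiv)
  have "switch_step (C (s - 1)) (C s)" if "s \<in> {1..length xs}" for s
    using that switch_step_update_row(1)[OF C_equiv] C_Suc[of "s - 1"] by auto
  moreover have "length xs \<ge> 1" "C 0 = A" "C (length xs) = B"
    using xs by (auto simp: C_def Suc_le_eq)
  ultimately show ?thesis by blast
qed

end
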